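(* There exist absolute constants $0<c\le C<\infty$ such that for all $d\in\mathbb N_+$ and all $1\le n\le 3^d$, $$c\,\psi(n)\le a_n(I_d: W_2^{\infty}(\mathbb T^d)\to L_2(\mathbb T^d))\le C\,\psi(n),\qquad \psi(n)=\begin{cases}1,&1\le n\le d,\\ \Big(\frac{\log(1+\frac{d}{\log n})}{\log n}\Big)^{1/2},& d\le n\le 3^d,\end{cases}$$ and $a_n(I_d: W_2^{\infty}(\mathbb T^d)\to L_2(\mathbb T^d))=0$ for $n>3^d$.
   Context: $\log$ is base 2. $\mathbb T^d$ carries the normalized Lebesgue measure and $\hat f({\bf k})$ are Fourier coefficients w.r.t. $e^{i{\bf k}\cdot{\bf x}}$. $W_2^\infty(\mathbb T^d)$ is the space of all $f\in\bigcap_{{\bf m}\in\mathbb N_+^d}W_2^{\bf m}(\mathbb T^d)$ with $\sup_{{\bf m}\in\mathbb N_+^d}\|f|W_2^{\bf m}(\mathbb T^d)\|<\infty$, normed by this supremum, where $\|f|W_2^{\bf m}(\mathbb T^d)\|=\big(\sum_{{\bf k}\in\mathbb Z^d}(1+\sum_j|k_j|^{2m_j})|\hat f({\bf k})|^2\big)^{1/2}$. Equivalently, $W_2^\infty(\mathbb T^d)$ consists of trigonometric polynomials $f=\sum_{{\bf k}\in\{-1,0,1\}^d}\hat f({\bf k})e^{i{\bf k}\cdot{\bf x}}$ with norm $\big(\sum_{{\bf k}\in\{-1,0,1\}^d}(1+\sum_{j=1}^d|k_j|)|\hat f({\bf k})|^2\big)^{1/2}$; it has dimension $3^d$. $I_d$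 is the identity embedding; $a_n(T)=\inf\{\|T-A\|:\operatorname{rank}A<n\}$. *)

theory Defs
  imports "HOL-Analysis.Analysis"
begin

text \<open>Functions on the torus are represented by their Fourier coefficients
  (Parseval: L_2(T^d) is isometric to l_2(Z^d)). Frequencies in Z^d are
  integer lists of length d.\<close>

definition freqs :: "nat \<Rightarrow> int list set" where
  "freqs d = {k. length k = d \<and> set k \<subseteq> {-1, 0, 1}}"

text \<open>W_2^infinity(T^d): trigonometric polynomials with frequencies in {-1,0,1}^d.\<close>
definition Wspace :: "nat \<Rightarrow> (int list \<Rightarrow> complex) set" where
  "Wspace d = {f. \<forall>k. k \<notin> freqs d \<longrightarrow> f k = 0}"

definition normW :: "nat \<Rightarrow> (int list \<Rightarrow> complex) \<Rightarrow> real" where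
  "normW d f = sqrt (\<Sum>k\<in>freqs d. (1 + real_of_int (sum_list (map abs k))) * (cmod (f k))\<^sup>2)"

definition L2space :: "nat \<Rightarrow> (int list \<Rightarrow> complex) set" where
  "L2space d = {g. (\<forall>k. length k \<noteq> d \<longrightarrow> g k = 0) \<and>
                   (\<lambda>k. (cmod (g k))\<^sup>2) summable_on UNIV}"

definition normL2 :: "(int list \<Rightarrow> complex) \<Rightarrow> real" where
  "normL2 g = sqrt (infsum (\<lambda>k. (cmod (g k))\<^sup>2) UNIV)"

definition low_rank_ops :: "nat \<Rightarrow> nat \<Rightarrow> ((int list \<Rightarrow> complex) \<Rightarrow> (int list \<Rightarrow> complex)) set" where
  "low_rank_ops d n = {A.
     (\<forall>f\<in>Wspace d. \<forall>g\<in>Wspace d. A (\<lambda>k. f k + g k) = (\<lambda>k. A f k + A g k)) \<and>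
     (\<forall>f\<in>Wspace d. \<forall>c. A (\<lambda>k. c * f k) = (\<lambda>k. c * A f k)) \<and>
     (\<forall>f\<in>Wspace d. A f \<in> L2space d) \<and>
     (\<exists>B. finite B \<and> card B < n \<and> B \<subseteq> L2space d \<and>
          (\<forall>f\<in>Wspace d. \<exists>c. A f = (\<lambda>k. \<Sum>b\<in>B. c b * b k)))}"

definition opnorm_diff :: "nat \<Rightarrow> ((int list \<Rightarrow> complex) \<Rightarrow> (int list \<Rightarrow> complex)) \<Rightarrow> real" where
  "opnorm_diff d A = (SUP f\<in>Wspace d - {\<lambda>k. 0}. normL2 (\<lambda>k. f k - A f k) / normW d f)"

definition approx_num :: "nat \<Rightarrow> nat \<Rightarrow> real" where
  "approx_num d n = (INF A\<in>low_rank_ops d n. opnorm_diff d A)"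

end

theory Submission
  imports Defs "HOL-Library.Function_Algebras"
begin

text \<open>In the Fourier basis the embedding is diagonal: the exponential with frequency k has
  L_2-norm 1 and W-norm (1 + |k|_1)^(1/2). Hence a_n = (1 + j)^(-1/2), where j is the least level
  such that at least n frequencies in {-1,0,1}^d satisfy |k|_1 \<le> j: projecting onto the
  frequencies of level < j gives the upper bound, and every operator of rank < n annihilates a
  nonzero polynomial with spectrum in n frequencies of level \<le> j, which gives the lower bound.
  There are sum_(i \<le> j) C(d,i) 2^i such frequencies, a number between (2d/j)^j and (6d/j)^j;
  solving n = (d/j)^j for j yields j \<approx> log n / log (1 + d / log n).\<close>

section \<open>Frequencies counted by level\<close>

definition level :: "int list \<Rightarrow> nat" where
  "level k = sum_list (map (\<lambda>a. nat \<bar>a\<bar>) k)"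

lemma level_Nil [simp]: "level [] = 0"
  and level_Cons [simp]: "level (a # k) = nat \<bar>a\<bar> + level k"
  by (simp_all add: level_def)

lemma of_nat_level: "real (level k) = real_of_int (sum_list (map abs k))"
  by (induction k) simp_all

lemma normW_eq: "normW d f = sqrt (\<Sum>k\<in>freqs d. (1 + real (level k)) * (cmod (f k))\<^sup>2)"
  by (simp add: normW_def of_nat_level)

lemma normW_nonneg: "0 \<le> normW d f"
  by (simp add: normW_eq sum_nonneg)

lemma power2_normW: "(normW d f)\<^sup>2 = (\<Sum>k\<in>freqs d. (1 + real (level k)) * (cmod (f k))\<^sup>2)"
  unfolding normW_eq by (rule real_sqrt_pow2) (simp add: sum_nonneg)

lemma freqs_0: "freqs 0 = {[]}"
  by (auto simp: freqs_def)

lemma freqs_Suc: "freqs (Suc d) = Cons 0 ` freqs d \<union> Cons 1 ` freqs d \<union> Cons (-1) ` freqs d"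
proof -
  have "k \<in> freqs (Suc d) \<longleftrightarrow>
      k \<in> Cons 0 ` freqs d \<union> Cons 1 ` freqs d \<union> Cons (-1) ` freqs d" for k
    by (cases k) (auto simp: freqs_def)
  then show ?thesis by blast
qed

lemma finite_freqs [simp]: "finite (freqs d)"
  by (induction d) (auto simp: freqs_0 freqs_Suc)

lemma level_le_dim: "k \<in> freqs d \<Longrightarrow> level k \<le> d"
  by (induction k arbitrary: d) (auto simp: freqs_def Suc_le_eq split: nat.splits)

definition freqs_level :: "nat \<Rightarrow> nat \<Rightarrow> int list set" where
  "freqs_level d i = {k \<in> freqs d. level k = i}"

definition freqs_atmost :: "nat \<Rightarrow> nat \<Rightarrow> int list set" where
  "freqs_atmost d j = {k \<in> freqs d. level k \<le> j}"

lemma finite_freqs_level [simp]: "finite (freqs_level d i)"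
  by (simp add: freqs_level_def)

lemma card_freqs_level: "card (freqs_level d i) = (d choose i) * 2 ^ i"
proof (induction d arbitrary: i)
  case 0
  have "freqs_level 0 i = (if i = 0 then {[]} else {})"
    by (auto simp: freqs_level_def freqs_0)
  then show ?case by simp
next
  case (Suc d)
  have card_Cons: "card (Cons a ` X) = card X" for a :: int and X
    by (simp add: card_image)
  show ?case
  proof (cases i)
    case 0
    then have "freqs_level (Suc d) i = Cons 0 ` freqs_level d 0"
      by (auto simp: freqs_level_def freqs_Suc)
    then show ?thesis using Suc.IH[of 0] 0 by (simp add: card_Cons)
  next
    case (Suc i')
    have "freqs_level (Suc d) i =
        Cons 0 ` freqs_level d i \<union> Cons 1 ` freqs_level d i' \<union> Cons (-1) ` freqs_level d i'"
      by (auto simp: freqs_level_def freqs_Suc Suc)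
    then have "card (freqs_level (Suc d) i) =
        card (freqs_level d i) + card (freqs_level d i') + card (freqs_level d i')"
      by (simp only:) ((subst card_Un_disjoint, simp, simp, force)+, simp add: card_Cons)
    also have "\<dots> = (Suc d choose i) * 2 ^ i"
      using Suc.IH by (simp add: Suc algebra_simps)
    finally show ?thesis .
  qed
qed

lemma card_freqs_atmost: "card (freqs_atmost d j) = (\<Sum>i\<le>j. (d choose i) * 2 ^ i)"
proof -
  have "freqs_atmost d j = (\<Union>i\<le>j. freqs_level d i)"
    by (auto simp: freqs_atmost_def freqs_level_def)
  then have "card (freqs_atmost d j) = (\<Sum>i\<le>j. card (freqs_level d i))"
    by (simp only:) (rule card_UN_disjoint, auto simp: freqs_level_def)
  then show ?thesis by (simp add: card_freqs_level)
qed

lemma freqs_atmost_dim: "freqs_atmost d d = freqs d"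
  using level_le_dim by (auto simp: freqs_atmost_def)

lemma card_freqs: "card (freqs d) = 3 ^ d"
  using binomial[of 2 1 d] card_freqs_atmost[of d d] by (simp add: freqs_atmost_dim)

lemma card_freqs_atmost_lower:
  assumes "1 \<le> m" "m \<le> d"
  shows "(2 * real d / real m) ^ m \<le> real (card (freqs_atmost d m))"
proof -
  have "(2 * real d / real m) ^ m = (real d / real m) ^ m * 2 ^ m"
    by (simp add: power_mult_distrib[symmetric] mult.commute)
  also have "\<dots> \<le> real (d choose m) * 2 ^ m"
    using binomial_ge_n_over_k_pow_k[of m d, where 'a=real] assms by simp
  also have "\<dots> = real (card (freqs_level d m))"
    by (simp add: card_freqs_level)
  also have "\<dots> \<le> real (card (freqs_atmost d m))"
    by (simp add: card_mono freqs_level_def freqs_atmost_def subset_iff)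
  finally show ?thesis .
qed

lemma card_freqs_atmost_upper:
  assumes "1 \<le> j" "j \<le> d"
  shows "real (card (freqs_atmost d j)) \<le> (6 * real d / real j) ^ j"
proof -
  define t where "t = real j / (2 * real d)"
  have t0: "0 < t" and t1: "t \<le> 1"
    using assms by (auto simp: t_def field_simps)
  \<comment> \<open>Rankin's trick: the factor t^i / t^j is at least 1 for i \<le> j, and with it the
    full binomial sum becomes (1 + 2t)^d.\<close>
  have "real (card (freqs_atmost d j)) = (\<Sum>i\<le>j. real (d choose i) * 2 ^ i)"
    by (simp add: card_freqs_atmost)
  also have "\<dots> \<le> (\<Sum>i\<le>j. real (d choose i) * (2 * t) ^ i / t ^ j)"
  proof (rule sum_mono)
    fix i assume "i \<in> {..j}"
    then have "t ^ j \<le> t ^ i"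
      using t0 t1 by (simp add: power_decreasing)
    then have "2 ^ i \<le> (2 * t) ^ i / t ^ j"
      using t0 by (simp add: field_simps power_mult_distrib)
    then show "real (d choose i) * 2 ^ i \<le> real (d choose i) * (2 * t) ^ i / t ^ j"
      using mult_left_mono by fastforce
  qed
  also have "\<dots> \<le> (\<Sum>i\<le>d. real (d choose i) * (2 * t) ^ i / t ^ j)"
    by (rule sum_mono2) (use assms t0 in auto)
  also have "\<dots> = (2 * t + 1) ^ d / t ^ j"
    by (simp add: binomial_ring sum_divide_distrib)
  also have "(2 * t + 1) ^ d \<le> exp (2 * t) ^ d"
    by (rule power_mono) (use t0 in \<open>auto simp: add.commute[of _ 1] exp_ge_add_one_self\<close>)
  also have "exp (2 * t) ^ d = exp 1 ^ j"
    using assms by (simp add: exp_of_nat_mult[symmetric] t_def)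
  also have "exp 1 ^ j \<le> (3::real) ^ j"
    by (rule power_mono) (auto simp: exp_le)
  finally have "real (card (freqs_atmost d j)) \<le> 3 ^ j / t ^ j"
    using t0 by (simp add: divide_right_mono)
  also have "\<dots> = (6 * real d / real j) ^ j"
  proof -
    have "3 / t = 6 * real d / real j"
      using assms by (simp add: t_def field_simps)
    then show ?thesis by (simp add: power_divide[symmetric])
  qed
  finally show ?thesis .
qed

section \<open>Logarithmic estimates\<close>

lemma log2_le_3_sqrt:
  fixes z :: real
  assumes "0 < z"
  shows "log 2 z \<le> 3 * sqrt z"
proof -
  have "ln z = 2 * ln (sqrt z)"
    using assms by (simp add: ln_sqrt)
  also have "\<dots> \<le> 2 * sqrt z"
    using ln_le_minus_one[of "sqrt z"] assms by simp
  finally have ln_le: "ln z \<le> 2 * sqrt z" .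
  show ?thesis
  proof (cases "0 \<le> ln z")
    case True
    have "ln z / ln 2 \<le> 2 * sqrt z / (2/3)"
      using True ln_le ln2_ge_two_thirds assms by (intro frac_le) auto
    then show ?thesis by (simp add: log_def)
  next
    case False
    then have "ln z / ln 2 < 0"
      by (simp add: divide_neg_pos)
    then show ?thesis
      using assms by (simp add: log_def less_imp_le[THEN order_trans])
  qed
qed

lemma log_one_plus_div_nonneg:
  fixes d L :: real
  assumes "0 \<le> d" "0 < L"
  shows "0 \<le> log 2 (1 + d / L)"
proof -
  have "0 \<le> d / L"
    using assms by simp
  then show ?thesis by simp
qed

lemma log_inversion_upper:
  fixes L j d :: real
  assumes j: "1 \<le> j" "j \<le> d" and L: "1 \<le> L" "L \<le> j * log 2 (6 * d / j)"
  shows "L \<le> 36 * j * log 2 (1 + d / L)"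
proof -
  define y where "y = d / j"
  define lg where "lg = log 2 (6 * y)"
  define r where "r = sqrt (6 * y)"
  have y1: "1 \<le> y" and r0: "0 < r"
    using j by (simp_all add: y_def r_def)
  have L_le: "L \<le> j * lg"
    using L(2) by (simp add: lg_def y_def)
  have lg_pos: "0 < lg"
  proof (rule ccontr)
    assume "\<not> 0 < lg"
    then have "j * lg \<le> 0"
      using j(1) by (simp add: mult_nonneg_nonpos)
    then show False using L_le L(1) by linarith
  qed
  \<comment> \<open>With r = sqrt (6y), both lg \<le> 3r and 6y = r^2 \<le> (1 + r/18)^36 hold, which turns
    L \<le> j lg into the claim since d / L \<ge> y / lg \<ge> r / 18.\<close>
  have "r / 18 = y / (3 * r)"
    using r0 y1 by (simp add: r_def field_simps)
  also have "\<dots> \<le> y / lg"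
    using log2_le_3_sqrt[of "6 * y"] lg_pos y1 by (intro divide_left_mono) (auto simp: lg_def r_def)
  also have "\<dots> = d / (j * lg)"
    using j by (simp add: y_def)
  also have "\<dots> \<le> d / L"
    using L_le L(1) lg_pos j by (intro divide_left_mono) auto
  finally have r_le: "r / 18 \<le> d / L" .
  have "6 * y = r ^ 2"
    using y1 by (simp add: r_def)
  also have "\<dots> \<le> (1 + r) ^ 2"
    using r0 by (intro power_mono) auto
  also have "\<dots> \<le> ((1 + r / 18) ^ 18) ^ 2"
    using Bernoulli_inequality[of "r / 18" 18] r0 by (intro power_mono) auto
  also have "\<dots> = (1 + r / 18) ^ 36"
    by (simp flip: power_mult)
  finally have "lg \<le> log 2 ((1 + r / 18) ^ 36)"
    unfolding lg_def using y1 r0 by (subst log_le_cancel_iff) auto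
  also have "\<dots> = 36 * log 2 (1 + r / 18)"
    using r0 by (simp add: log_nat_power)
  also have "\<dots> \<le> 36 * log 2 (1 + d / L)"
    using r_le r0 by (intro mult_left_mono log_mono) auto
  finally have "j * lg \<le> j * (36 * log 2 (1 + d / L))"
    using j(1) by (intro mult_left_mono) auto
  with L_le show ?thesis by simp
qed

lemma log_one_plus_div_le:
  fixes L d :: real
  assumes d: "1 \<le> d" and L: "1 \<le> L" "log 2 d \<le> L"
  shows "log 2 (1 + d / L) \<le> 2 * L"
proof -
  have "d / L \<le> d"
    using d L by (simp add: field_simps)
  then have "log 2 (1 + d / L) \<le> log 2 (2 * d)"
    using d L by (intro log_mono) (auto intro: add_pos_nonneg)
  also have "\<dots> = 1 + log 2 d"
    using d by (simp add: log_mult)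
  finally show ?thesis using L by simp
qed

lemma log_inversion_lower:
  fixes L m d :: real
  assumes m: "1 \<le> m" "m \<le> d" and L: "1 \<le> L" "m * log 2 (2 * d / m) < L"
  shows "(m + 2) * log 2 (1 + d / L) \<le> 3 * L"
proof -
  define z where "z = 2 * d / m"
  have z2: "2 \<le> z"
    using m by (simp add: z_def field_simps)
  then have "m \<le> m * log 2 z"
    using m by simp
  then have "m < L"
    using L(2) by (simp add: z_def)
  then have "d / L \<le> d / m"
    using m by (intro divide_left_mono) auto
  also have "\<dots> \<le> z - 1"
    using m by (simp add: z_def field_simps)
  finally have X_le: "log 2 (1 + d / L) \<le> log 2 z"
    using L m by (intro log_mono) (auto intro: add_pos_nonneg)
  have X_nonneg: "0 \<le> log 2 (1 + d / L)"
    using L m by (intro log_one_plus_div_nonneg) auto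
  have "(m + 2) * log 2 (1 + d / L) \<le> (3 * m) * log 2 z"
    using X_le X_nonneg m by (intro mult_mono) auto
  also have "\<dots> < 3 * L"
    using L(2) by (simp add: z_def)
  finally show ?thesis by simp
qed

lemma inv_sqrt_between:
  fixes L X J :: real
  assumes "0 < L" "0 \<le> X" "0 < J" "J * X \<le> 4 * L" "L \<le> 36 * J * X"
  shows "1/2 * sqrt (X / L) \<le> 1 / sqrt J" "1 / sqrt J \<le> 6 * sqrt (X / L)"
proof -
  have "sqrt (X / L) \<le> sqrt (4 / J)"
    using assms by (intro real_sqrt_le_mono) (simp add: field_simps)
  then show "1/2 * sqrt (X / L) \<le> 1 / sqrt J"
    by (simp add: real_sqrt_divide)
  have "sqrt (1 / J) \<le> sqrt (36 * (X / L))"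
    using assms by (intro real_sqrt_le_mono) (simp add: field_simps)
  moreover have "sqrt 36 = (6::real)"
    by (rule real_sqrt_unique) simp_all
  ultimately show "1 / sqrt J \<le> 6 * sqrt (X / L)"
    by (simp add: real_sqrt_divide real_sqrt_mult)
qed

section \<open>Operators of small rank\<close>

lemma summable_on_finite_support:
  assumes "finite K" "\<And>x. x \<notin> K \<Longrightarrow> g x = 0"
  shows "(\<lambda>x. (cmod (g x))\<^sup>2) summable_on UNIV"
  using assms by (subst summable_on_cong_neutral[where T=K]) auto

lemma normL2_finite_support:
  assumes "finite K" "\<And>x. x \<notin> K \<Longrightarrow> g x = 0"
  shows "normL2 g = sqrt (\<Sum>x\<in>K. (cmod (g x))\<^sup>2)"
proof -
  have "infsum (\<lambda>x. (cmod (g x))\<^sup>2) UNIV = infsum (\<lambda>x. (cmod (g x))\<^sup>2) K"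
    using assms(2) by (intro infsum_cong_neutral) auto
  then show ?thesis
    using assms(1) by (simp add: normL2_def)
qed

lemma normL2_nonneg: "0 \<le> normL2 g"
  by (simp add: normL2_def infsum_nonneg)

lemma summable_on_sum_fun:
  fixes g :: "'i \<Rightarrow> 'a \<Rightarrow> 'b::topological_comm_monoid_add"
  assumes "\<And>i. i \<in> I \<Longrightarrow> g i summable_on A"
  shows "(\<lambda>x. \<Sum>i\<in>I. g i x) summable_on A"
  using assms by (induction I rule: infinite_finite_induct) (auto intro: summable_on_add)

lemma (in vector_space) module_hom_kernel_nontrivial:
  assumes T: "module_hom scale scale T" and E: "independent E"
    and B: "finite B" "T ` E \<subseteq> span B" "card B < card E"
  shows "\<exists>x\<in>span E. x \<noteq> 0 \<and> T x = 0"
proof (rule ccontr)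
  interpret T: module_hom scale scale T by (fact T)
  assume "\<not> ?thesis"
  then have inj: "inj_on T (span E)"
    by (auto simp: T.inj_on_iff_eq_0 subspace_span)
  have "independent (T ` E)"
    using E inj by (rule T.independent_injective_image)
  then have "card (T ` E) \<le> card B"
    using independent_span_bound[OF B(1) _ B(2)] by blast
  moreover have "card (T ` E) = card E"
    using inj span_superset by (intro card_image) (rule inj_on_subset)
  ultimately show False using B(3) by simp
qed

definition scale_fun :: "complex \<Rightarrow> (int list \<Rightarrow> complex) \<Rightarrow> int list \<Rightarrow> complex" where
  "scale_fun c f = (\<lambda>x. c * f x)"

interpretation fun_space: vector_space scale_fun
  by unfold_locales (auto simp: scale_fun_def fun_eq_iff algebra_simps)

definition delta :: "int list \<Rightarrow> int list \<Rightarrow> complex" where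
  "delta k = (\<lambda>x. if x = k then 1 else 0)"

definition coord_proj :: "int list set \<Rightarrow> (int list \<Rightarrow> complex) \<Rightarrow> int list \<Rightarrow> complex" where
  "coord_proj T f = (\<lambda>x. if x \<in> T then f x else 0)"

lemma sum_fun_apply: "sum g K x = (\<Sum>k\<in>K. g k x)"
  for g :: "'c \<Rightarrow> 'a \<Rightarrow> 'b::comm_monoid_add"
  by (induction K rule: infinite_finite_induct) auto

lemma inj_delta: "inj delta"
  by (auto simp: inj_def delta_def fun_eq_iff split: if_splits)

lemma delta_Wspace: "k \<in> freqs d \<Longrightarrow> delta k \<in> Wspace d"
  by (simp add: Wspace_def delta_def)

lemma delta_L2space: "k \<in> freqs d \<Longrightarrow> delta k \<in> L2space d"
  unfolding L2space_def
  by (auto simp: delta_def freqs_def intro!: summable_on_finite_support[of "{k}"] split: if_splits)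

lemma independent_delta:
  assumes "finite S"
  shows "fun_space.independent (delta ` S)"
proof -
  have "c (delta k) = 0"
    if sum0: "(\<Sum>v\<in>delta ` S. scale_fun (c v) v) = 0" and k: "k \<in> S" for c k
  proof -
    have "0 = (\<Sum>v\<in>delta ` S. scale_fun (c v) v) k"
      using sum0 by simp
    also have "\<dots> = (\<Sum>k'\<in>S. c (delta k') * delta k' k)"
      using inj_delta by (simp add: sum_fun_apply scale_fun_def sum.reindex inj_on_def)
    also have "\<dots> = (\<Sum>k'\<in>S. if k' = k then c (delta k) else 0)"
      by (rule sum.cong) (auto simp: delta_def)
    also have "\<dots> = c (delta k)"
      using k assms by simp
    finally show ?thesis by simp
  qed
  then show ?thesis
    using assms by (auto simp: fun_space.dependent_finite)
qed

lemma span_delta_support: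
  assumes "f \<in> fun_space.span (delta ` S)" "x \<notin> S"
  shows "f x = 0"
proof -
  have "fun_space.span (delta ` S) \<subseteq> {g. \<forall>x. x \<notin> S \<longrightarrow> g x = 0}"
    by (rule fun_space.span_minimal) (auto simp: delta_def fun_space.subspace_def scale_fun_def)
  with assms show ?thesis by blast
qed

lemma coord_proj_Wspace: "coord_proj (freqs d) f \<in> Wspace d"
  by (simp add: coord_proj_def Wspace_def)

lemma coord_proj_freqs: "f \<in> Wspace d \<Longrightarrow> coord_proj (freqs d) f = f"
  by (auto simp: coord_proj_def Wspace_def fun_eq_iff)

lemma Wspace_expand:
  assumes "f \<in> Wspace d"
  shows "f = (\<Sum>k\<in>freqs d. scale_fun (f k) (delta k))"
proof
  fix x
  have "(\<Sum>k\<in>freqs d. scale_fun (f k) (delta k)) x = (\<Sum>k\<in>freqs d. if k = x then f x else 0)"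
    unfolding sum_fun_apply by (rule sum.cong) (auto simp: scale_fun_def delta_def)
  also have "\<dots> = f x"
    using assms by (cases "x \<in> freqs d") (auto simp: Wspace_def)
  finally show "f x = (\<Sum>k\<in>freqs d. scale_fun (f k) (delta k)) x" by simp
qed

text \<open>An operator in low_rank_ops is only linear on Wspace d; composing it with the
  projection onto freqs d makes it linear on all coefficient functions.\<close>

lemma low_rank_ops_module_hom:
  assumes "A \<in> low_rank_ops d n"
  shows "module_hom scale_fun scale_fun (\<lambda>f. A (coord_proj (freqs d) f))"
  unfolding module_hom_iff
proof (intro conjI allI)
  have add: "\<And>f g. f \<in> Wspace d \<Longrightarrow> g \<in> Wspace d \<Longrightarrow> A (\<lambda>k. f k + g k) = (\<lambda>k. A f k + A g k)"
    and scale: "\<And>f c. f \<in> Wspace d \<Longrightarrow> A (\<lambda>k. c * f k) = (\<lambda>k. c * A f k)"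
    using assms by (simp_all add: low_rank_ops_def)
  fix f g c
  have "coord_proj (freqs d) (f + g) = (\<lambda>x. coord_proj (freqs d) f x + coord_proj (freqs d) g x)"
    by (auto simp: coord_proj_def)
  then show "A (coord_proj (freqs d) (f + g)) = A (coord_proj (freqs d) f) + A (coord_proj (freqs d) g)"
    by (simp add: add coord_proj_Wspace plus_fun_def)
  have "coord_proj (freqs d) (scale_fun c f) = (\<lambda>x. c * coord_proj (freqs d) f x)"
    by (auto simp: coord_proj_def scale_fun_def)
  then show "A (coord_proj (freqs d) (scale_fun c f)) = scale_fun c (A (coord_proj (freqs d) f))"
    by (simp add: scale coord_proj_Wspace scale_fun_def)
qed (fact fun_space.module_axioms)+

lemma low_rank_ops_expand:
  assumes A: "A \<in> low_rank_ops d n" and f: "f \<in> Wspace d"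
  shows "A f = (\<Sum>k\<in>freqs d. scale_fun (f k) (A (delta k)))"
proof -
  interpret A: module_hom scale_fun scale_fun "\<lambda>f. A (coord_proj (freqs d) f)"
    using A by (rule low_rank_ops_module_hom)
  have "A f = A (coord_proj (freqs d) (\<Sum>k\<in>freqs d. scale_fun (f k) (delta k)))"
    using f by (simp flip: Wspace_expand add: coord_proj_freqs)
  also have "\<dots> = (\<Sum>k\<in>freqs d. scale_fun (f k) (A (coord_proj (freqs d) (delta k))))"
    by (simp add: A.sum A.scale)
  also have "\<dots> = (\<Sum>k\<in>freqs d. scale_fun (f k) (A (delta k)))"
    by (intro sum.cong) (simp_all add: coord_proj_freqs delta_Wspace)
  finally show ?thesis .
qed

lemma low_rank_opsE:
  assumes "A \<in> low_rank_ops d n"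
  obtains B where "finite B" "card B < n" "B \<subseteq> L2space d"
    "\<forall>f\<in>Wspace d. \<exists>c. A f = (\<lambda>k. \<Sum>b\<in>B. c b * b k)"
proof -
  have "\<exists>B. finite B \<and> card B < n \<and> B \<subseteq> L2space d \<and>
      (\<forall>f\<in>Wspace d. \<exists>c. A f = (\<lambda>k. \<Sum>b\<in>B. c b * b k))"
    using assms by (simp add: low_rank_ops_def)
  then show ?thesis
    by (elim exE conjE) (rule that)
qed

lemma low_rank_ops_kernel:
  assumes A: "A \<in> low_rank_ops d n" and S: "S \<subseteq> freqs d" "card S = n"
  obtains f where "f \<in> Wspace d" "f \<noteq> (\<lambda>k. 0)" "\<And>x. x \<notin> S \<Longrightarrow> f x = 0" "A f = (\<lambda>k. 0)"
proof -
  have fin: "finite S"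
    using S(1) by (rule finite_subset) simp
  obtain B where B: "finite B" "card B < n" "B \<subseteq> L2space d"
      "\<forall>f\<in>Wspace d. \<exists>c. A f = (\<lambda>k. \<Sum>b\<in>B. c b * b k)"
    using A by (rule low_rank_opsE)
  let ?T = "\<lambda>f. A (coord_proj (freqs d) f)"
  have "?T ` delta ` S \<subseteq> fun_space.span B"
  proof safe
    fix k assume "k \<in> S"
    obtain c where "?T (delta k) = (\<lambda>x. \<Sum>b\<in>B. c b * b x)"
      using B(4) coord_proj_Wspace[of d "delta k"] by blast
    then have "?T (delta k) = (\<Sum>b\<in>B. scale_fun (c b) b)"
      by (simp add: fun_eq_iff sum_fun_apply scale_fun_def)
    then show "?T (delta k) \<in> fun_space.span B"
      by (auto intro!: fun_space.span_sum fun_space.span_scale intro: fun_space.span_base)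
  qed
  moreover have "card B < card (delta ` S)"
    using B(2) S(2) card_image[OF inj_on_subset[OF inj_delta subset_UNIV]] by simp
  ultimately have "\<exists>f\<in>fun_space.span (delta ` S). f \<noteq> 0 \<and> ?T f = 0"
    by (intro fun_space.module_hom_kernel_nontrivial[OF low_rank_ops_module_hom[OF A]
        independent_delta[OF fin] B(1)])
  then obtain f where f: "f \<in> fun_space.span (delta ` S)" "f \<noteq> 0" "?T f = 0"
    by blast
  have supp: "f x = 0" if "x \<notin> S" for x
    using span_delta_support[OF f(1) that] .
  then have "f \<in> Wspace d"
    using S(1) by (auto simp: Wspace_def)
  with f supp show ?thesis
    by (intro that) (simp_all add: coord_proj_freqs zero_fun_def)
qed

lemma low_rank_ops_delta_error_summable:
  assumes A: "A \<in> low_rank_ops d n" and k: "k \<in> freqs d"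
  shows "(\<lambda>x. (cmod (delta k x - A (delta k) x))\<^sup>2) summable_on UNIV"
proof (rule summable_on_comparison_test)
  have "(\<lambda>x. (cmod (delta k x))\<^sup>2) summable_on UNIV"
    by (rule summable_on_finite_support[of "{k}"]) (auto simp: delta_def)
  moreover have "A (delta k) \<in> L2space d"
    using A delta_Wspace[OF k] by (simp add: low_rank_ops_def)
  ultimately show "(\<lambda>x. 2 * (cmod (delta k x))\<^sup>2 + 2 * (cmod (A (delta k) x))\<^sup>2) summable_on UNIV"
    by (intro summable_on_add summable_on_cmult_right) (auto simp: L2space_def)
  fix x
  let ?a = "cmod (delta k x)" and ?b = "cmod (A (delta k) x)"
  have "(cmod (delta k x - A (delta k) x))\<^sup>2 \<le> (?a + ?b)\<^sup>2"
    by (intro power_mono norm_triangle_ineq4) auto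
  also have "\<dots> \<le> 2 * ?a\<^sup>2 + 2 * ?b\<^sup>2"
    using zero_le_power2[of "?a - ?b"] unfolding power2_sum power2_diff by linarith
  finally show "(cmod (delta k x - A (delta k) x))\<^sup>2 \<le> 2 * ?a\<^sup>2 + 2 * ?b\<^sup>2" .
qed simp

lemma low_rank_ops_error_pointwise:
  assumes A: "A \<in> low_rank_ops d n" and f: "f \<in> Wspace d"
  shows "(cmod (f x - A f x))\<^sup>2
    \<le> (normW d f)\<^sup>2 * (\<Sum>k\<in>freqs d. (cmod (delta k x - A (delta k) x))\<^sup>2)"
proof -
  have "f x - A f x = (\<Sum>k\<in>freqs d. f k * (delta k x - A (delta k) x))"
    using fun_cong[OF Wspace_expand[OF f], of x] fun_cong[OF low_rank_ops_expand[OF A f], of x]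
    by (simp add: sum_fun_apply scale_fun_def right_diff_distrib sum_subtractf)
  then have "cmod (f x - A f x) \<le> (\<Sum>k\<in>freqs d. cmod (f k) * cmod (delta k x - A (delta k) x))"
    using norm_sum[of "\<lambda>k. f k * (delta k x - A (delta k) x)" "freqs d"] by (simp add: norm_mult)
  then have "(cmod (f x - A f x))\<^sup>2
      \<le> (\<Sum>k\<in>freqs d. cmod (f k) * cmod (delta k x - A (delta k) x))\<^sup>2"
    by (intro power_mono) auto
  also have "\<dots> \<le> (\<Sum>k\<in>freqs d. (cmod (f k))\<^sup>2) *
      (\<Sum>k\<in>freqs d. (cmod (delta k x - A (delta k) x))\<^sup>2)"
    by (rule Cauchy_Schwarz_ineq_sum)
  also have "\<dots> \<le> (normW d f)\<^sup>2 * (\<Sum>k\<in>freqs d. (cmod (delta k x - A (delta k) x))\<^sup>2)"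
    unfolding power2_normW
    by (intro mult_right_mono sum_mono sum_nonneg) (auto simp: mult_le_cancel_right1)
  finally show ?thesis .
qed

lemma low_rank_ops_error_bound:
  assumes A: "A \<in> low_rank_ops d n"
  obtains M where "0 \<le> M" "\<And>f. f \<in> Wspace d \<Longrightarrow> normL2 (\<lambda>k. f k - A f k) \<le> M * normW d f"
proof -
  define G where "G x = (\<Sum>k\<in>freqs d. (cmod (delta k x - A (delta k) x))\<^sup>2)" for x
  define M where "M = sqrt (infsum G UNIV)"
  have G_summable: "G summable_on UNIV"
    unfolding G_def using low_rank_ops_delta_error_summable[OF A] by (rule summable_on_sum_fun)
  have G_nonneg: "0 \<le> infsum G UNIV"
    by (simp add: G_def infsum_nonneg sum_nonneg)
  show ?thesis
  proof
    show "0 \<le> M"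
      using G_nonneg by (simp add: M_def)
    fix f assume f: "f \<in> Wspace d"
    have GM: "(\<lambda>x. (normW d f)\<^sup>2 * G x) summable_on UNIV"
      by (intro summable_on_cmult_right G_summable)
    have "infsum (\<lambda>x. (cmod (f x - A f x))\<^sup>2) UNIV \<le> infsum (\<lambda>x. (normW d f)\<^sup>2 * G x) UNIV"
      using low_rank_ops_error_pointwise[OF A f] unfolding G_def[symmetric]
      by (intro infsum_mono summable_on_comparison_test[OF GM] GM) auto
    also have "\<dots> = (normW d f)\<^sup>2 * infsum G UNIV"
      by (rule infsum_cmult_right) (use G_summable in auto)
    also have "\<dots> = (normW d f * M)\<^sup>2"
      using G_nonneg by (simp add: M_def power_mult_distrib)
    finally have "normL2 (\<lambda>k. f k - A f k) \<le> sqrt ((normW d f * M)\<^sup>2)"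
      unfolding normL2_def by (rule real_sqrt_le_mono)
    also have "\<dots> = M * normW d f"
      using G_nonneg normW_nonneg[of d f] by (simp add: M_def mult.commute)
    finally show "normL2 (\<lambda>k. f k - A f k) \<le> M * normW d f" .
  qed
qed

lemma normW_pos:
  assumes "f \<in> Wspace d" "f \<noteq> (\<lambda>k. 0)"
  shows "0 < normW d f"
proof -
  obtain x where x: "f x \<noteq> 0"
    using assms(2) by auto
  then have "x \<in> freqs d"
    using assms(1) by (auto simp: Wspace_def)
  then have "0 < (\<Sum>k\<in>freqs d. (1 + real (level k)) * (cmod (f k))\<^sup>2)"
    using x by (intro sum_pos2) auto
  then show ?thesis
    by (simp add: normW_eq)
qed

section \<open>The approximation numbers\<close>

text \<open>The supremum in opnorm_diff is taken in a conditionally complete lattice, so it is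
  only meaningful once the set of error ratios is known to be bounded.\<close>

lemma error_ratio_bdd_above:
  assumes "A \<in> low_rank_ops d n"
  shows "bdd_above ((\<lambda>f. normL2 (\<lambda>k. f k - A f k) / normW d f) ` (Wspace d - {\<lambda>k. 0}))"
proof -
  obtain M where M: "\<And>f. f \<in> Wspace d \<Longrightarrow> normL2 (\<lambda>k. f k - A f k) \<le> M * normW d f"
    using low_rank_ops_error_bound[OF assms] by blast
  have "normL2 (\<lambda>k. f k - A f k) / normW d f \<le> M" if "f \<in> Wspace d - {\<lambda>k. 0}" for f
    using M[of f] normW_pos[of f d] that by (simp add: pos_divide_le_eq)
  then show ?thesis
    by (rule bdd_aboveI2)
qed

lemma error_ratio_le_opnorm_diff:
  assumes "A \<in> low_rank_ops d n" "f \<in> Wspace d" "f \<noteq> (\<lambda>k. 0)"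
  shows "normL2 (\<lambda>k. f k - A f k) / normW d f \<le> opnorm_diff d A"
  unfolding opnorm_diff_def
  by (rule cSUP_upper) (use assms error_ratio_bdd_above in auto)

lemma delta_replicate_nonzero: "delta (replicate d 0) \<in> Wspace d - {\<lambda>k. 0}"
proof -
  have "replicate d 0 \<in> freqs d"
    by (auto simp: freqs_def)
  then have "delta (replicate d 0) \<in> Wspace d"
    by (rule delta_Wspace)
  moreover have "delta (replicate d 0) \<noteq> (\<lambda>k. 0)"
    by (auto simp: delta_def fun_eq_iff)
  ultimately show ?thesis by simp
qed

lemma opnorm_diff_nonneg:
  assumes "A \<in> low_rank_ops d n"
  shows "0 \<le> opnorm_diff d A"
proof -
  let ?f = "delta (replicate d 0)"
  have "0 \<le> normL2 (\<lambda>k. ?f k - A ?f k) / normW d ?f"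
    by (simp add: normL2_nonneg normW_nonneg)
  also have "\<dots> \<le> opnorm_diff d A"
    using delta_replicate_nonzero by (intro error_ratio_le_opnorm_diff[OF assms]) auto
  finally show ?thesis .
qed

lemma opnorm_diff_le:
  assumes "0 \<le> M" "\<And>f. f \<in> Wspace d \<Longrightarrow> normL2 (\<lambda>k. f k - A f k) \<le> M * normW d f"
  shows "opnorm_diff d A \<le> M"
  unfolding opnorm_diff_def
proof (rule cSUP_least)
  show "Wspace d - {\<lambda>k. 0} \<noteq> {}"
    using delta_replicate_nonzero by blast
  fix f assume "f \<in> Wspace d - {\<lambda>k. 0}"
  then show "normL2 (\<lambda>k. f k - A f k) / normW d f \<le> M"
    using assms(2)[of f] normW_pos[of f d] by (simp add: pos_divide_le_eq)
qed

lemma approx_num_ge: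
  assumes "1 \<le> n" "\<And>A. A \<in> low_rank_ops d n \<Longrightarrow> c \<le> opnorm_diff d A"
  shows "c \<le> approx_num d n"
proof -
  have "(\<lambda>f k. 0) \<in> low_rank_ops d n"
    using assms(1) by (auto simp: low_rank_ops_def L2space_def intro!: exI[of _ "{}"])
  then show ?thesis
    unfolding approx_num_def by (intro cINF_greatest assms(2)) auto
qed

lemma approx_num_le_opnorm_diff:
  assumes "A \<in> low_rank_ops d n"
  shows "approx_num d n \<le> opnorm_diff d A"
  unfolding approx_num_def
  by (rule cINF_lower[OF _ assms]) (auto intro: bdd_belowI2 opnorm_diff_nonneg)

lemma coord_proj_low_rank_ops:
  assumes T: "T \<subseteq> freqs d" "card T < n"
  shows "coord_proj T \<in> low_rank_ops d n"
proof -
  have fin: "finite T"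
    using T(1) by (rule finite_subset) simp
  have L2: "coord_proj T f \<in> L2space d" for f
    using T(1) unfolding L2space_def
    by (auto simp: coord_proj_def freqs_def intro: summable_on_finite_support[OF fin])
  have basis: "delta ` T \<subseteq> L2space d"
    using T(1) delta_L2space by blast
  have repr: "coord_proj T f = (\<lambda>x. \<Sum>b\<in>delta ` T. f (inv delta b) * b x)" for f
  proof
    fix x
    have "(\<Sum>b\<in>delta ` T. f (inv delta b) * b x) = (\<Sum>k\<in>T. f k * delta k x)"
      using inj_delta by (simp add: sum.reindex inj_on_def)
    also have "\<dots> = (\<Sum>k\<in>T. if k = x then f x else 0)"
      by (rule sum.cong) (auto simp: delta_def)
    also have "\<dots> = coord_proj T f x"
      using fin by (simp add: coord_proj_def)
    finally show "coord_proj T f x = (\<Sum>b\<in>delta ` T. f (inv delta b) * b x)" ..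
  qed
  have card: "card (delta ` T) < n"
    using T(2) card_image_le[OF fin, of delta] by linarith
  show ?thesis
    unfolding low_rank_ops_def mem_Collect_eq
  proof (intro conjI ballI allI exI[of _ "delta ` T"])
    show "\<exists>c. coord_proj T f = (\<lambda>k. \<Sum>b\<in>delta ` T. c b * b k)" for f
      using repr[of f] by (intro exI[of _ "\<lambda>b. f (inv delta b)"])
  qed (use fin L2 basis card in \<open>auto simp: coord_proj_def\<close>)
qed

lemma approx_num_le_tail:
  assumes T: "T \<subseteq> freqs d" "card T < n" and M: "0 \<le> M"
    and tail: "\<And>f. f \<in> Wspace d \<Longrightarrow> sqrt (\<Sum>k\<in>freqs d - T. (cmod (f k))\<^sup>2) \<le> M * normW d f"
  shows "approx_num d n \<le> M"
proof -
  have "normL2 (\<lambda>k. f k - coord_proj T f k) \<le> M * normW d f" if f: "f \<in> Wspace d" for f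
  proof -
    have "normL2 (\<lambda>k. f k - coord_proj T f k) =
        sqrt (\<Sum>k\<in>freqs d - T. (cmod (f k - coord_proj T f k))\<^sup>2)"
      using f by (intro normL2_finite_support) (auto simp: coord_proj_def Wspace_def)
    also have "\<dots> = sqrt (\<Sum>k\<in>freqs d - T. (cmod (f k))\<^sup>2)"
      by (simp add: coord_proj_def)
    finally show ?thesis
      using tail[OF f] by simp
  qed
  then have "opnorm_diff d (coord_proj T) \<le> M"
    by (rule opnorm_diff_le[OF M])
  then show ?thesis
    using approx_num_le_opnorm_diff[OF coord_proj_low_rank_ops[OF T]] by linarith
qed

lemma approx_num_ge_level:
  assumes n: "1 \<le> n" and S: "S \<subseteq> freqs_atmost d j" "card S = n"
  shows "1 / sqrt (1 + real j) \<le> approx_num d n"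
proof (rule approx_num_ge[OF n])
  fix A assume A: "A \<in> low_rank_ops d n"
  have S_freqs: "S \<subseteq> freqs d"
    using S(1) by (auto simp: freqs_atmost_def)
  then have fin: "finite S"
    by (rule finite_subset) simp
  obtain f where f: "f \<in> Wspace d" "f \<noteq> (\<lambda>k. 0)" "\<And>x. x \<notin> S \<Longrightarrow> f x = 0" "A f = (\<lambda>k. 0)"
    using low_rank_ops_kernel[OF A S_freqs S(2)] by blast
  have L2: "normL2 (\<lambda>k. f k - A f k) = sqrt (\<Sum>k\<in>S. (cmod (f k))\<^sup>2)"
    using normL2_finite_support[OF fin, of f] f(3,4) by simp
  have "(normW d f)\<^sup>2 = (\<Sum>k\<in>S. (1 + real (level k)) * (cmod (f k))\<^sup>2)"
    unfolding power2_normW using S_freqs f(3) by (intro sum.mono_neutral_right) auto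
  also have "\<dots> \<le> (\<Sum>k\<in>S. (1 + real j) * (cmod (f k))\<^sup>2)"
    using S(1) by (intro sum_mono mult_right_mono) (auto simp: freqs_atmost_def)
  finally have "normW d f \<le> sqrt (1 + real j) * normL2 (\<lambda>k. f k - A f k)"
    unfolding L2 using normW_nonneg[of d f]
    by (simp add: sum_distrib_left real_le_rsqrt flip: real_sqrt_mult)
  then have "1 / sqrt (1 + real j) \<le> normL2 (\<lambda>k. f k - A f k) / normW d f"
    using normW_pos[OF f(1,2)] by (simp add: field_simps)
  also have "\<dots> \<le> opnorm_diff d A"
    by (rule error_ratio_le_opnorm_diff[OF A f(1,2)])
  finally show "1 / sqrt (1 + real j) \<le> opnorm_diff d A" .
qed

definition covering_level :: "nat \<Rightarrow> nat \<Rightarrow> nat" where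
  "covering_level d n = (LEAST j. n \<le> card (freqs_atmost d j))"

lemma covering_level_le: "n \<le> card (freqs_atmost d j) \<Longrightarrow> covering_level d n \<le> j"
  unfolding covering_level_def by (rule Least_le)

lemma covering_level_le_dim: "n \<le> 3 ^ d \<Longrightarrow> covering_level d n \<le> d"
  by (rule covering_level_le) (simp add: freqs_atmost_dim card_freqs)

lemma le_card_freqs_atmost_covering_level:
  "n \<le> 3 ^ d \<Longrightarrow> n \<le> card (freqs_atmost d (covering_level d n))"
  unfolding covering_level_def
  by (rule LeastI[of _ d]) (simp add: freqs_atmost_dim card_freqs)

lemma card_freqs_atmost_less: "j < covering_level d n \<Longrightarrow> card (freqs_atmost d j) < n"
  unfolding covering_level_def using not_less_Least by (metis not_le)

theorem approx_num_eq:
  assumes n: "1 \<le> n" "n \<le> 3 ^ d"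
  shows "approx_num d n = 1 / sqrt (1 + real (covering_level d n))"
proof (rule antisym)
  define j where "j = covering_level d n"
  define T where "T = {k \<in> freqs d. level k < j}"
  have card_T: "card T < n"
  proof (cases j)
    case 0
    then show ?thesis using n by (simp add: T_def)
  next
    case (Suc i)
    then have "T = freqs_atmost d i"
      by (auto simp: T_def freqs_atmost_def)
    then show ?thesis
      using card_freqs_atmost_less[of i d n] Suc by (simp add: j_def)
  qed
  show "approx_num d n \<le> 1 / sqrt (1 + real (covering_level d n))"
    unfolding j_def[symmetric]
  proof (rule approx_num_le_tail[of T])
    fix f assume f: "f \<in> Wspace d"
    have "(\<Sum>k\<in>freqs d - T. (cmod (f k))\<^sup>2)
        \<le> (\<Sum>k\<in>freqs d - T. (1 + real (level k)) * (cmod (f k))\<^sup>2 / (1 + real j))"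
      by (intro sum_mono) (auto simp: T_def field_simps mult_right_mono)
    also have "\<dots> \<le> (\<Sum>k\<in>freqs d. (1 + real (level k)) * (cmod (f k))\<^sup>2 / (1 + real j))"
      by (intro sum_mono2) auto
    also have "\<dots> = (normW d f / sqrt (1 + real j))\<^sup>2"
      by (simp add: power2_normW power_divide sum_divide_distrib)
    finally show "sqrt (\<Sum>k\<in>freqs d - T. (cmod (f k))\<^sup>2) \<le> 1 / sqrt (1 + real j) * normW d f"
      using normW_nonneg[of d f] by (simp add: real_sqrt_le_iff real_le_lsqrt)
  qed (use card_T in \<open>auto simp: T_def\<close>)
  obtain S where "S \<subseteq> freqs_atmost d (covering_level d n)" "card S = n"
    using obtain_subset_with_card_n[OF le_card_freqs_atmost_covering_level[OF n(2)]] by blast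
  then show "1 / sqrt (1 + real (covering_level d n)) \<le> approx_num d n"
    by (rule approx_num_ge_level[OF n(1)])
qed

lemma approx_num_eq_0:
  assumes "3 ^ d < n"
  shows "approx_num d n = 0"
proof (rule antisym)
  show "approx_num d n \<le> 0"
    using assms by (intro approx_num_le_tail[of "freqs d"]) (auto simp: card_freqs)
  show "0 \<le> approx_num d n"
    using assms by (intro approx_num_ge) (auto intro: opnorm_diff_nonneg)
qed

lemma covering_level_pos:
  assumes "2 \<le> n" "n \<le> 3 ^ d"
  shows "1 \<le> covering_level d n"
  using le_card_freqs_atmost_covering_level[OF assms(2)] assms(1)
  by (cases "covering_level d n") (auto simp: card_freqs_atmost)

lemma covering_level_log_upper:
  assumes n: "2 \<le> n" "n \<le> 3 ^ d"
  shows "log 2 n \<le> 36 * (1 + real (covering_level d n)) * log 2 (1 + d / log 2 n)"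
proof -
  define j where "j = covering_level d n"
  have j: "1 \<le> j" "j \<le> d"
    using covering_level_pos[OF n] covering_level_le_dim[OF n(2)] by (simp_all add: j_def)
  have L: "1 \<le> log 2 n"
    using n by simp
  have "real n \<le> real (card (freqs_atmost d j))"
    using le_card_freqs_atmost_covering_level[OF n(2)] by (simp add: j_def)
  also have "\<dots> \<le> (6 * real d / real j) ^ j"
    using j by (rule card_freqs_atmost_upper)
  finally have "log 2 n \<le> log 2 ((6 * real d / real j) ^ j)"
    using n by (intro log_mono) auto
  also have "\<dots> = real j * log 2 (6 * real d / real j)"
    using j by (intro log_nat_power) simp
  finally have "log 2 n \<le> 36 * real j * log 2 (1 + d / log 2 n)"
    using j L by (intro log_inversion_upper) auto
  also have "\<dots> \<le> 36 * (1 + real j) * log 2 (1 + d / log 2 n)"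
    using L by (intro mult_right_mono log_one_plus_div_nonneg) auto
  finally show ?thesis by (simp add: j_def)
qed

lemma covering_level_log_lower:
  assumes d: "1 \<le> d" "d \<le> n" and n: "2 \<le> n" "n \<le> 3 ^ d"
  shows "(1 + real (covering_level d n)) * log 2 (1 + d / log 2 n) \<le> 4 * log 2 n"
proof -
  define j where "j = covering_level d n"
  define X where "X = log 2 (1 + d / log 2 n)"
  have L: "1 \<le> log 2 n"
    using n by simp
  have X_nonneg: "0 \<le> X"
    unfolding X_def using L by (intro log_one_plus_div_nonneg) auto
  show ?thesis
    unfolding j_def[symmetric] X_def[symmetric]
  proof (cases "j \<le> 1")
    case True
    have "(1 + real j) * X \<le> 2 * X"
      using True X_nonneg by (intro mult_right_mono) auto
    also have "X \<le> 2 * log 2 n"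
      unfolding X_def using d L by (intro log_one_plus_div_le) auto
    finally show "(1 + real j) * X \<le> 4 * log 2 n" by simp
  next
    case False
    define m where "m = j - 1"
    have m: "1 \<le> m" "m \<le> d" "m < j"
      using False covering_level_le_dim[OF n(2)] by (auto simp: m_def j_def)
    have "(2 * real d / real m) ^ m \<le> real (card (freqs_atmost d m))"
      using m by (intro card_freqs_atmost_lower) auto
    also have "\<dots> < real n"
      using card_freqs_atmost_less[of m d n] m by (simp add: j_def)
    finally have "log 2 ((2 * real d / real m) ^ m) < log 2 n"
      using m(1) d(1) by (intro log_less) simp_all
    then have "real m * log 2 (2 * real d / real m) < log 2 n"
      by (simp add: log_nat_power)
    then have "(real m + 2) * X \<le> 3 * log 2 n"
      unfolding X_def using m L by (intro log_inversion_lower) auto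
    moreover have "real m + 2 = 1 + real j"
      using m by (simp add: m_def)
    ultimately show "(1 + real j) * X \<le> 4 * log 2 n"
      using L by simp
  qed
qed

lemma approx_num_small_n:
  assumes "1 \<le> n" "n \<le> d"
  shows "1/2 \<le> approx_num d n" "approx_num d n \<le> 1"
proof -
  have "(2::nat) ^ d \<le> 3 ^ d"
    by (rule power_mono) simp_all
  then have "n \<le> 3 ^ d"
    using assms(2) less_exp[of d] by linarith
  have "covering_level d n \<le> 1"
    using assms(2) by (intro covering_level_le) (simp add: card_freqs_atmost)
  then have "sqrt (1 + real (covering_level d n)) \<le> sqrt 4"
    by (intro real_sqrt_le_mono) simp
  then show "1/2 \<le> approx_num d n" "approx_num d n \<le> 1"
    by (simp_all add: approx_num_eq[OF assms(1) \<open>n \<le> 3 ^ d\<close>] field_simps)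
qed

lemma approx_num_large_n:
  assumes "1 \<le> d" "d \<le> n" "2 \<le> n" "n \<le> 3 ^ d"
  defines "\<psi> \<equiv> sqrt (log 2 (1 + real d / log 2 (real n)) / log 2 (real n))"
  shows "1/2 * \<psi> \<le> approx_num d n" "approx_num d n \<le> 6 * \<psi>"
proof -
  have "0 < log 2 (real n)" "0 \<le> log 2 (1 + real d / log 2 (real n))"
    using assms by (auto intro: log_one_plus_div_nonneg)
  note bounds = inv_sqrt_between[OF this _ covering_level_log_lower[OF assms(1-4)]
      covering_level_log_upper[OF assms(3,4)]]
  have "approx_num d n = 1 / sqrt (1 + real (covering_level d n))"
    using assms by (intro approx_num_eq) auto
  with bounds show "1/2 * \<psi> \<le> approx_num d n" "approx_num d n \<le> 6 * \<psi>"
    by (simp_all add: \<psi>_def)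
qed

theorem theorem2p3:
  shows "\<exists>c C::real. 0 < c \<and> c \<le> C \<and>
    (\<forall>d n::nat. 1 \<le> d \<longrightarrow> 1 \<le> n \<longrightarrow> n \<le> 3 ^ d \<longrightarrow>
       (n \<le> d \<longrightarrow> c \<le> approx_num d n \<and> approx_num d n \<le> C) \<and>
       (d \<le> n \<and> 2 \<le> n \<longrightarrow>
          (let \<psi> = sqrt (log 2 (1 + real d / log 2 (real n)) / log 2 (real n))
           in c * \<psi> \<le> approx_num d n \<and> approx_num d n \<le> C * \<psi>))) \<and>
    (\<forall>d n::nat. 1 \<le> d \<longrightarrow> 3 ^ d < n \<longrightarrow> approx_num d n = 0)"
proof (rule exI[of _ "1/2"], rule exI[of _ 6], intro conjI allI impI)
  fix d n :: nat
  assume dn: "1 \<le> d" "1 \<le> n" "n \<le> 3 ^ d"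
  {
    assume "n \<le> d"
    from approx_num_small_n[OF dn(2) this]
    show "1/2 \<le> approx_num d n" "approx_num d n \<le> 6" by simp_all
  next
    assume "d \<le> n \<and> 2 \<le> n"
    with approx_num_large_n[OF dn(1) _ _ dn(3)]
    show "let \<psi> = sqrt (log 2 (1 + real d / log 2 (real n)) / log 2 (real n))
        in 1/2 * \<psi> \<le> approx_num d n \<and> approx_num d n \<le> 6 * \<psi>"
      by (simp add: Let_def)
  }
qed (simp_all add: approx_num_eq_0)

end
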